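(* Let $n\ge4$ and let $W_n$ be the wheel graph on $n$ vertices with signless Laplacian matrix \[Q=\left[\begin{array}{c|c} n-1 & \mathbf{1}^T \\ \hline \mathbf{1} & B \end{array}\right],\] where $B$ is the circulant matrix $\mathrm{circ}(3,1,0,\ldots,0,1)$ of order $n-1$. Then the Moore–Penrose inverse of $Q$ is \[Q^+=\frac{1}{4(n-1)} \left[\begin{array}{r|c} 5 & -\mathbf{1}^T \\ \hline -\mathbf{1} & J_{n-1}+2X \end{array}\right],\] where, with $C=\mathrm{circ}(1,0,\ldots,0,1)$ of order $n-1$, $X=2(CC^T+I_{n-1})^{-1}\left[ (n-1)I_{n-1}-J_{n-1}\right]=\mathrm{circ}(b_0,b_1,\ldots,b_{n-2})$ with, for $j=0,\ldots,n-2$, \[b_j=-\frac{2}{5}+\frac{2^{n-j}(n-1)}{\sqrt{5}}\left[\frac{(-3+\sqrt{5})^j}{2^{n-1}-(-3+\sqrt{5})^{n-1}}-\frac{(-3-\sqrt{5})^j}{2^{n-1}-(-3-\sqrt{5})^{n-1}}\right].\]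
   Context: The wheel graph $W_n$ ($n\ge4$) is a cycle on $n-1$ vertices together with a hub vertex adjacent to every cycle vertex; in the displayed form the hub is listed first and the cycle vertices follow in cyclic order. The signless Laplacian is $Q=D+A$, where $A$ is the adjacency matrix and $D$ the diagonal degree matrix. For $c_0,\dots,c_{k-1}$, $\mathrm{circ}(c_0,\ldots,c_{k-1})$ denotes the $k\times k$ circulant matrix whose $(i,j)$-entry is $c_{(j-i)\bmod k}$. $\mathbf 1$ is the all-ones column vector of length $n-1$, $J_{n-1}$ the $(n-1)\times(n-1)$ all-ones matrix, $I_{n-1}$ the identity. The Moore–Penrose inverse $A^+$ of a real matrix $A$ is the unique matrix with $AA^+A=A$, $A^+AA^+=A^+$, $(AA^+)^T=AA^+$, $(A^+A)^T=A^+A$. *)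

theory Defs
  imports Complex_Main "Jordan_Normal_Form.Matrix"
begin

definition circ_mat :: "nat \<Rightarrow> (nat \<Rightarrow> real) \<Rightarrow> real mat" where
  "circ_mat k c = mat k k (\<lambda>(i, j). c ((j + k - i) mod k))"

definition ones_mat :: "nat \<Rightarrow> nat \<Rightarrow> real mat" where
  "ones_mat r c = mat r c (\<lambda>_. 1)"

definition is_moore_penrose_inverse :: "real mat \<Rightarrow> real mat \<Rightarrow> bool" where
  "is_moore_penrose_inverse A P \<longleftrightarrow>
     P \<in> carrier_mat (dim_col A) (dim_row A) \<and>
     A * P * A = A \<and> P * A * P = P \<and>
     transpose_mat (A * P) = A * P \<and> transpose_mat (P * A) = P * A"

(* signless Laplacian of the wheel W_n, hub first, in the block form of the paper *)
definition wheel_B :: "nat \<Rightarrow> real mat" where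
  "wheel_B n = circ_mat (n - 1) (\<lambda>j. if j = 0 then 3 else if j = 1 \<or> j = n - 2 then 1 else 0)"

definition wheel_Q :: "nat \<Rightarrow> real mat" where
  "wheel_Q n = four_block_mat (mat 1 1 (\<lambda>_. real n - 1)) (ones_mat 1 (n - 1))
                              (ones_mat (n - 1) 1) (wheel_B n)"

definition wheel_C :: "nat \<Rightarrow> real mat" where
  "wheel_C n = circ_mat (n - 1) (\<lambda>j. if j = 0 \<or> j = n - 2 then 1 else 0)"

definition wheel_b :: "nat \<Rightarrow> nat \<Rightarrow> real" where
  "wheel_b n j = - 2 / 5 + (2 ^ (n - j) * (real n - 1) / sqrt 5) *
      ((-3 + sqrt 5) ^ j / (2 ^ (n - 1) - (-3 + sqrt 5) ^ (n - 1))
     - (-3 - sqrt 5) ^ j / (2 ^ (n - 1) - (-3 - sqrt 5) ^ (n - 1)))"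

definition wheel_X :: "nat \<Rightarrow> real mat" where
  "wheel_X n = circ_mat (n - 1) (wheel_b n)"

definition wheel_Qplus :: "nat \<Rightarrow> real mat" where
  "wheel_Qplus n = (1 / (4 * (real n - 1))) \<cdot>\<^sub>m
     four_block_mat (mat 1 1 (\<lambda>_. 5)) (- ones_mat 1 (n - 1))
                    (- ones_mat (n - 1) 1) (ones_mat (n - 1) (n - 1) + 2 \<cdot>\<^sub>m wheel_X n)"

end

theory Submission
  imports Defs "Jordan_Normal_Form.Determinant"
begin

(* Write m = n - 1. Since B = C C^T + I is the circulant with symbol 3 + z + 1/z, the identity
   B X = 2 (m I - J) says that the symbol b of X satisfies the cyclic recurrence
     b (t - 1) + 3 b t + b (t + 1) = 2 m [t = 0] - 2.
   The constant -2/5 accounts for the right-hand side -2. For each root r of r^2 + 3 r + 1 the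
   sequence r^j / (1 - r^m) solves the homogeneous recurrence except at the wrap-around: its
   defects are r + 3 at t = 0 and 1 at t = m - 1, so the difference of the two such sequences
   for r = (-3 +- sqrt 5) / 2, scaled by 2 m / sqrt 5, has defect exactly 2 m [t = 0].
   Summing the recurrence gives 5 (b 0 + ... + b (m - 1)) = 0, so X has zero column sums, and
   with B 1 = 5 1 a block multiplication yields Q Q^+ = I. Hence Q^+ is the inverse of Q, which
   satisfies the Penrose conditions; similarly X / (2 m) + J / (5 m) is the inverse of B. *)

lemma cyclic_diff_eq_0_iff:
  fixes i j m :: nat
  assumes "i < m" "j < m"
  shows "(j + m - i) mod m = 0 \<longleftrightarrow> i = j"
  using assms by (cases "i \<le> j") (auto simp: mod_if)

lemma int_cyclic_diff:
  assumes "i < m"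
  shows "int ((j + m - i) mod m) = (int j - int i) mod int m"
proof -
  have "int (j + m - i) = int j - int i + int m" using assms by simp
  then show ?thesis by (simp add: zmod_int)
qed

lemma cyclic_diff_add_cancel:
  fixes d i m :: nat
  assumes "i < m" "d < m"
  shows "((i + d) mod m + m - i) mod m = d"
  using assms by (cases "i + d < m") (auto simp: mod_if)

lemma sum_lessThan_cyclic_shift:
  fixes f :: "nat \<Rightarrow> 'a::comm_monoid_add"
  assumes "i < m"
  shows "(\<Sum>k<m. f k) = (\<Sum>d<m. f ((i + d) mod m))"
  using assms
  by (intro sum.reindex_bij_witness[where i = "\<lambda>d. (i + d) mod m" and j = "\<lambda>k. (k + m - i) mod m"])
     (auto simp: mod_add_right_eq cyclic_diff_add_cancel)

lemma cyclic_reflect_involutive: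
  fixes i k m :: nat
  assumes "i < m" "k < m"
  shows "(i + m - (i + m - k) mod m) mod m = k"
  using assms by (cases "k \<le> i") (auto simp: mod_if)

lemma sum_lessThan_cyclic_reflect:
  fixes f :: "nat \<Rightarrow> 'a::comm_monoid_add"
  assumes "i < m"
  shows "(\<Sum>k<m. f ((i + m - k) mod m)) = (\<Sum>d<m. f d)"
  using assms
  by (intro sum.reindex_bij_witness[where i = "\<lambda>d. (i + m - d) mod m" and j = "\<lambda>k. (i + m - k) mod m"])
     (auto simp: cyclic_reflect_involutive)

lemma cyclic_diff_diff:
  fixes d i j m :: nat
  assumes "i < m" "d < m"
  shows "(j + m - (i + d) mod m) mod m = ((j + m - i) mod m + m - d) mod m"
proof -
  have "int ((j + m - (i + d) mod m) mod m) = (int j - int ((i + d) mod m)) mod int m"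
    using assms by (intro int_cyclic_diff) simp
  also have "\<dots> = (int j - int i - int d) mod int m"
    by (simp add: zmod_int mod_diff_right_eq diff_diff_eq)
  also have "\<dots> = (int ((j + m - i) mod m) - int d) mod int m"
    using assms by (simp add: int_cyclic_diff mod_diff_left_eq)
  also have "\<dots> = int (((j + m - i) mod m + m - d) mod m)"
    using assms by (simp add: int_cyclic_diff)
  finally show ?thesis by simp
qed

lemma circ_mat_carrier [simp]: "circ_mat m c \<in> carrier_mat m m"
  by (simp add: circ_mat_def)

lemma dim_row_circ_mat [simp]: "dim_row (circ_mat m c) = m"
  and dim_col_circ_mat [simp]: "dim_col (circ_mat m c) = m"
  by (simp_all add: circ_mat_def)

lemma index_circ_mat [simp]:
  "i < m \<Longrightarrow> j < m \<Longrightarrow> circ_mat m c $$ (i, j) = c ((j + m - i) mod m)"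
  by (simp add: circ_mat_def)

lemma circ_mat_cong: "(\<And>t. t < m \<Longrightarrow> a t = c t) \<Longrightarrow> circ_mat m a = circ_mat m c"
  by (rule eq_matI) auto

lemma one_mat_eq_circ_mat: "1\<^sub>m m = circ_mat m (\<lambda>t. if t = 0 then 1 else 0)"
  by (rule eq_matI) (auto simp: cyclic_diff_eq_0_iff)

lemma add_circ_mat: "circ_mat m a + circ_mat m c = circ_mat m (\<lambda>t. a t + c t)"
  by (rule eq_matI) auto

lemma transpose_circ_mat: "transpose_mat (circ_mat m c) = circ_mat m (\<lambda>t. c ((m - t) mod m))"
proof (rule eq_matI)
  fix i j assume "i < dim_row (circ_mat m (\<lambda>t. c ((m - t) mod m)))"
    and "j < dim_col (circ_mat m (\<lambda>t. c ((m - t) mod m)))"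
  then have "i < m" "j < m" by simp_all
  moreover from this have "(m - (j + m - i) mod m) mod m = (i + m - j) mod m"
    by (cases "i \<le> j") (auto simp: mod_if)
  ultimately show "transpose_mat (circ_mat m c) $$ (i, j) = circ_mat m (\<lambda>t. c ((m - t) mod m)) $$ (i, j)"
    by simp
qed simp_all

lemma mult_circ_mat:
  "circ_mat m a * circ_mat m c = circ_mat m (\<lambda>t. \<Sum>d<m. a d * c ((t + m - d) mod m))"
proof (rule eq_matI)
  fix i j assume "i < dim_row (circ_mat m (\<lambda>t. \<Sum>d<m. a d * c ((t + m - d) mod m)))"
    and "j < dim_col (circ_mat m (\<lambda>t. \<Sum>d<m. a d * c ((t + m - d) mod m)))"
  then have i: "i < m" and j: "j < m" by simp_all
  have "(circ_mat m a * circ_mat m c) $$ (i, j) = (\<Sum>k<m. a ((k + m - i) mod m) * c ((j + m - k) mod m))"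
    using i j by (simp add: scalar_prod_def lessThan_atLeast0)
  also have "\<dots> = (\<Sum>d<m. a d * c (((j + m - i) mod m + m - d) mod m))"
    using i by (subst sum_lessThan_cyclic_shift[OF i]) (simp add: cyclic_diff_add_cancel cyclic_diff_diff)
  finally show "(circ_mat m a * circ_mat m c) $$ (i, j)
      = circ_mat m (\<lambda>t. \<Sum>d<m. a d * c ((t + m - d) mod m)) $$ (i, j)"
    using i j by simp
qed simp_all

lemma ones_mat_carrier [simp]: "ones_mat r c \<in> carrier_mat r c"
  by (simp add: ones_mat_def)

lemma dim_row_ones_mat [simp]: "dim_row (ones_mat r c) = r"
  and dim_col_ones_mat [simp]: "dim_col (ones_mat r c) = c"
  by (simp_all add: ones_mat_def)

lemma index_ones_mat [simp]: "i < r \<Longrightarrow> j < c \<Longrightarrow> ones_mat r c $$ (i, j) = 1"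
  by (simp add: ones_mat_def)

lemma circ_mat_mult_ones_mat: "circ_mat m c * ones_mat m k = (\<Sum>d<m. c d) \<cdot>\<^sub>m ones_mat m k"
proof (rule eq_matI)
  fix i j
  assume "i < dim_row ((\<Sum>d<m. c d) \<cdot>\<^sub>m ones_mat m k)"
    and "j < dim_col ((\<Sum>d<m. c d) \<cdot>\<^sub>m ones_mat m k)"
  then have i: "i < m" and j: "j < k" by simp_all
  have "(circ_mat m c * ones_mat m k) $$ (i, j) = (\<Sum>l<m. c ((l + m - i) mod m))"
    using i j by (simp add: scalar_prod_def lessThan_atLeast0)
  also have "\<dots> = (\<Sum>d<m. c d)"
    by (subst sum_lessThan_cyclic_shift[OF i]) (simp add: cyclic_diff_add_cancel i)
  finally show "(circ_mat m c * ones_mat m k) $$ (i, j) = ((\<Sum>d<m. c d) \<cdot>\<^sub>m ones_mat m k) $$ (i, j)"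
    using i j by simp
qed simp_all

lemma ones_mat_mult_circ_mat: "ones_mat k m * circ_mat m c = (\<Sum>d<m. c d) \<cdot>\<^sub>m ones_mat k m"
proof (rule eq_matI)
  fix i j
  assume "i < dim_row ((\<Sum>d<m. c d) \<cdot>\<^sub>m ones_mat k m)"
    and "j < dim_col ((\<Sum>d<m. c d) \<cdot>\<^sub>m ones_mat k m)"
  then have i: "i < k" and j: "j < m" by simp_all
  have "(ones_mat k m * circ_mat m c) $$ (i, j) = (\<Sum>l<m. c ((j + m - l) mod m))"
    using i j by (simp add: scalar_prod_def lessThan_atLeast0)
  also have "\<dots> = (\<Sum>d<m. c d)" using j by (rule sum_lessThan_cyclic_reflect)
  finally show "(ones_mat k m * circ_mat m c) $$ (i, j) = ((\<Sum>d<m. c d) \<cdot>\<^sub>m ones_mat k m) $$ (i, j)"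
    using i j by simp
qed simp_all

lemma is_moore_penrose_inverse_if_right_inverse:
  assumes "A \<in> carrier_mat n n" "P \<in> carrier_mat n n" "A * P = 1\<^sub>m n"
  shows "is_moore_penrose_inverse A P"
  using mat_mult_left_right_inverse[OF assms] assms
  unfolding is_moore_penrose_inverse_def by simp

lemma invertible_mat_if_right_inverse:
  fixes A P :: "'a::field mat"
  assumes "A \<in> carrier_mat n n" "P \<in> carrier_mat n n" "A * P = 1\<^sub>m n"
  shows "invertible_mat A"
  using mat_mult_left_right_inverse[OF assms] assms
  unfolding invertible_mat_def inverts_mat_def by auto

lemma inverts_mat_carrier:
  assumes "A \<in> carrier_mat n n" "inverts_mat A M" "inverts_mat M A"
  shows "M \<in> carrier_mat n n" "M * A = 1\<^sub>m n"
proof -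
  have "dim_col M = n" "dim_row M = n"
    using assms arg_cong[OF assms(2)[unfolded inverts_mat_def], of dim_col]
      arg_cong[OF assms(3)[unfolded inverts_mat_def], of dim_col] by auto
  then show "M \<in> carrier_mat n n" "M * A = 1\<^sub>m n"
    using assms(3) unfolding inverts_mat_def by auto
qed

lemma four_block_mult_eq_smult_one_mat:
  fixes B X :: "real mat"
  assumes B: "B \<in> carrier_mat m m" and X: "X \<in> carrier_mat m m"
    and B_ones: "\<And>k. B * ones_mat m k = 5 \<cdot>\<^sub>m ones_mat m k"
    and BX: "B * X = 2 \<cdot>\<^sub>m (real m \<cdot>\<^sub>m 1\<^sub>m m - ones_mat m m)"
    and ones_X: "ones_mat 1 m * X = 0\<^sub>m 1 m"
  shows "four_block_mat (mat 1 1 (\<lambda>_. real m)) (ones_mat 1 m) (ones_mat m 1) B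
       * four_block_mat (mat 1 1 (\<lambda>_. 5)) (- ones_mat 1 m) (- ones_mat m 1) (ones_mat m m + 2 \<cdot>\<^sub>m X)
       = (4 * real m) \<cdot>\<^sub>m 1\<^sub>m (1 + m)" (is "?Q * ?F = _")
proof -
  have top_left: "mat 1 1 (\<lambda>_. real m) * mat 1 1 (\<lambda>_. 5) + ones_mat 1 m * - ones_mat m 1
      = mat 1 1 (\<lambda>_. 4 * real m)"
    by (rule eq_matI) (auto simp: scalar_prod_def)
  have "ones_mat 1 m * (ones_mat m m + 2 \<cdot>\<^sub>m X)
      = ones_mat 1 m * ones_mat m m + 2 \<cdot>\<^sub>m (ones_mat 1 m * X)"
    using mult_add_distrib_mat[OF ones_mat_carrier ones_mat_carrier smult_carrier_mat[OF X]]
      mult_smult_distrib[OF ones_mat_carrier X] by simp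
  then have top_right:
    "mat 1 1 (\<lambda>_. real m) * - ones_mat 1 m + ones_mat 1 m * (ones_mat m m + 2 \<cdot>\<^sub>m X) = 0\<^sub>m 1 m"
    unfolding ones_X by (auto intro!: eq_matI simp: scalar_prod_def)
  have "B * - ones_mat m 1 = - (5 \<cdot>\<^sub>m ones_mat m 1)"
    using B B_ones[of 1] by (simp add: uminus_mult_right_mat)
  then have bottom_left: "ones_mat m 1 * mat 1 1 (\<lambda>_. 5) + B * - ones_mat m 1 = 0\<^sub>m m 1"
    by (auto intro!: eq_matI simp: scalar_prod_def)
  have "B * (ones_mat m m + 2 \<cdot>\<^sub>m X) = B * ones_mat m m + 2 \<cdot>\<^sub>m (B * X)"
    using mult_add_distrib_mat[OF B ones_mat_carrier smult_carrier_mat[OF X]]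
      mult_smult_distrib[OF B X] by simp
  then have bottom_right: "ones_mat m 1 * - ones_mat 1 m + B * (ones_mat m m + 2 \<cdot>\<^sub>m X)
      = (4 * real m) \<cdot>\<^sub>m 1\<^sub>m m"
    unfolding BX B_ones by (auto intro!: eq_matI simp: scalar_prod_def)
  have "?Q * ?F
      = four_block_mat (mat 1 1 (\<lambda>_. 4 * real m)) (0\<^sub>m 1 m) (0\<^sub>m m 1) ((4 * real m) \<cdot>\<^sub>m 1\<^sub>m m)"
    unfolding top_left [symmetric] top_right [symmetric] bottom_left [symmetric] bottom_right [symmetric]
    by (rule mult_four_block_mat) (use B X in auto)
  then show ?thesis
    by (auto intro!: eq_matI)
qed

definition cyclic_geom :: "real \<Rightarrow> nat \<Rightarrow> nat \<Rightarrow> real" where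
  "cyclic_geom r m j = r ^ j / (1 - r ^ m)"

lemma cyclic_geom_recurrence:
  assumes root: "r\<^sup>2 + 3 * r + 1 = 0" and r_pow: "r ^ m \<noteq> 1" and m: "2 \<le> m" and t: "t < m"
  shows "3 * cyclic_geom r m t + cyclic_geom r m ((t + m - 1) mod m) + cyclic_geom r m ((t + 1) mod m)
    = (if t = 0 then r + 3 else 0) + (if t = m - 1 then 1 else 0)"
proof -
  let ?g = "cyclic_geom r m"
  have shift: "?g (Suc j) = r * ?g j" for j
    by (simp add: cyclic_geom_def)
  have homogeneous: "?g j + 3 * ?g (j + 1) + ?g (j + 2) = 0" for j
  proof -
    have "?g j + 3 * ?g (j + 1) + ?g (j + 2) = (r\<^sup>2 + 3 * r + 1) * ?g j"
      by (simp add: shift numeral_2_eq_2 power2_eq_square algebra_simps)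
    then show ?thesis using root by simp
  qed
  have wrap: "?g m = ?g 0 - 1"
    using r_pow by (simp add: cyclic_geom_def field_simps)
  obtain s where s: "m = s + 2" using m by (metis add.commute le_Suc_ex)
  consider "t = 0" | "t = s + 1" | "0 < t" "t < s + 1"
    using t s by linarith
  then show ?thesis
  proof cases
    case 1
    have "r * ?g (s + 1) = ?g 0 - 1"
      using shift[of "s + 1"] wrap s by simp
    moreover have "r * ?g 0 = ?g 1" "r * ?g 1 = ?g 2"
      using shift[of 0] shift[of 1] by (simp_all add: numeral_2_eq_2)
    ultimately have "r * (3 * ?g 0 + ?g (s + 1) + ?g 1) = ?g 0 + 3 * ?g 1 + ?g 2 - 1"
      by (simp add: algebra_simps)
    also have "\<dots> = -1"
      using homogeneous[of 0] by (simp add: numeral_2_eq_2)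
    also have "\<dots> = r * (r + 3)"
      using root by (simp add: power2_eq_square algebra_simps)
    finally have "3 * ?g 0 + ?g (s + 1) + ?g 1 = r + 3"
      using root by (cases "r = 0") auto
    then show ?thesis using 1 s by simp
  next
    case 2
    have "3 * ?g (s + 1) + ?g s + ?g 0 = (?g s + 3 * ?g (s + 1) + ?g (s + 2)) + 1"
      using wrap s by simp
    then show ?thesis using 2 s homogeneous[of s] by (simp add: mod_if)
  next
    case 3
    then obtain u where "t = u + 1" "u < s" by (metis Suc_eq_plus1 Suc_less_SucD gr0_implies_Suc)
    then show ?thesis using s homogeneous[of u] by (simp add: mod_if add.commute)
  qed
qed

lemma pow2_quotient_eq_cyclic_geom:
  fixes r :: real
  assumes "j \<le> n" "0 < n"
  shows "2 ^ (n - j) * ((2 * r) ^ j / (2 ^ (n - 1) - (2 * r) ^ (n - 1))) = 2 * cyclic_geom r (n - 1) j"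
proof -
  have pow2: "(2::real) ^ (n - j) * 2 ^ j = 2 * 2 ^ (n - 1)"
    using assms by (simp flip: power_add power_Suc)
  have "2 ^ (n - 1) - (2 * r) ^ (n - 1) = 2 ^ (n - 1) * (1 - r ^ (n - 1))"
    by (simp add: algebra_simps)
  then have "2 ^ (n - j) * ((2 * r) ^ j / (2 ^ (n - 1) - (2 * r) ^ (n - 1)))
      = (2 ^ (n - j) * 2 ^ j) * r ^ j / (2 ^ (n - 1) * (1 - r ^ (n - 1)))"
    by simp
  also have "\<dots> = 2 * cyclic_geom r (n - 1) j"
    unfolding pow2 cyclic_geom_def by simp
  finally show ?thesis .
qed

lemma wheel_b_eq_cyclic_geom:
  assumes "j \<le> n" "0 < n"
  shows "wheel_b n j = - 2 / 5 + 2 * (real n - 1) / sqrt 5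
     * (cyclic_geom ((-3 + sqrt 5) / 2) (n - 1) j - cyclic_geom ((-3 - sqrt 5) / 2) (n - 1) j)"
proof -
  define rp rm where "rp = (-3 + sqrt 5) / 2" and "rm = (-3 - sqrt 5) / 2"
  have roots: "-3 + sqrt 5 = 2 * rp" "-3 - sqrt 5 = 2 * rm"
    by (simp_all add: rp_def rm_def)
  have "wheel_b n j = - 2 / 5 + (real n - 1) / sqrt 5
     * (2 ^ (n - j) * ((2 * rp) ^ j / (2 ^ (n - 1) - (2 * rp) ^ (n - 1)))
        - 2 ^ (n - j) * ((2 * rm) ^ j / (2 ^ (n - 1) - (2 * rm) ^ (n - 1))))"
    unfolding wheel_b_def roots by (simp add: algebra_simps)
  also have "\<dots> = - 2 / 5 + 2 * (real n - 1) / sqrt 5 * (cyclic_geom rp (n - 1) j - cyclic_geom rm (n - 1) j)"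
    unfolding pow2_quotient_eq_cyclic_geom[OF assms] by (simp add: field_simps)
  finally show ?thesis unfolding rp_def rm_def .
qed

lemma cyclic_geom_difference_recurrence:
  assumes r: "r\<^sup>2 + 3 * r + 1 = 0" "r ^ m \<noteq> 1" and s: "s\<^sup>2 + 3 * s + 1 = 0" "s ^ m \<noteq> 1"
    and m: "2 \<le> m" and t: "t < m"
    and h: "\<And>j. j < m \<Longrightarrow> h j = a + K * (cyclic_geom r m j - cyclic_geom s m j)"
  shows "3 * h t + h ((t + m - 1) mod m) + h ((t + 1) mod m) = 5 * a + (if t = 0 then K * (r - s) else 0)"
proof -
  let ?p = "(t + m - 1) mod m" and ?q = "(t + 1) mod m"
  have "?p < m" "?q < m" using m by simp_all
  then have "3 * h t + h ?p + h ?q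
      = 5 * a + K * ((3 * cyclic_geom r m t + cyclic_geom r m ?p + cyclic_geom r m ?q)
                   - (3 * cyclic_geom s m t + cyclic_geom s m ?p + cyclic_geom s m ?q))"
    using t by (simp add: h algebra_simps)
  then show ?thesis
    using cyclic_geom_recurrence[OF r m t] cyclic_geom_recurrence[OF s m t] by simp
qed

lemma wheel_b_recurrence:
  assumes n: "3 \<le> n" and t: "t < n - 1"
  shows "3 * wheel_b n t + wheel_b n ((t + (n - 1) - 1) mod (n - 1)) + wheel_b n ((t + 1) mod (n - 1))
    = (if t = 0 then 2 * (real n - 1) else 0) - 2"
proof -
  define m where "m = n - 1"
  define rp rm where "rp = (-3 + sqrt 5) / 2" and "rm = (-3 - sqrt 5) / 2"
  have m: "2 \<le> m" "real n - 1 = real m" using n by (auto simp: m_def)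
  have roots: "rp\<^sup>2 + 3 * rp + 1 = 0" "rm\<^sup>2 + 3 * rm + 1 = 0"
    by (simp_all add: rp_def rm_def power2_eq_square field_simps)
  have "2 < sqrt 5" "sqrt 5 < 3"
    by (simp_all add: real_less_rsqrt real_less_lsqrt)
  then have "\<bar>rp\<bar> < 1" "1 < \<bar>rm\<bar>"
    by (simp_all add: rp_def rm_def)
  then have "\<bar>rp ^ m\<bar> < 1" "1 < \<bar>rm ^ m\<bar>"
    using m by (simp_all add: power_abs power_less_one_iff)
  then have powers: "rp ^ m \<noteq> 1" "rm ^ m \<noteq> 1"
    by auto
  define K where "K = 2 * real m / sqrt 5"
  have b: "wheel_b n j = - 2 / 5 + K * (cyclic_geom rp m j - cyclic_geom rm m j)" if "j < m" for j
  proof -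
    have "j \<le> n" "0 < n" using that by (auto simp: m_def)
    from wheel_b_eq_cyclic_geom[OF this, folded rp_def rm_def m_def] show ?thesis
      by (simp only: m(2) K_def)
  qed
  have "K * (rp - rm) = 2 * real m"
    by (simp add: K_def rp_def rm_def field_simps)
  with cyclic_geom_difference_recurrence[OF roots(1) powers(1) roots(2) powers(2) m(1), of t "wheel_b n"]
  show ?thesis
    using b t unfolding m(2) m_def by simp
qed

lemma wheel_b_sum:
  assumes n: "3 \<le> n"
  shows "(\<Sum>j<n - 1. wheel_b n j) = 0"
proof -
  define m where "m = n - 1"
  let ?b = "wheel_b n"
  have m: "2 \<le> m" using n by (simp add: m_def)
  have shift_back: "(\<Sum>t<m. ?b ((t + m - 1) mod m)) = (\<Sum>j<m. ?b j)"
    using sum_lessThan_cyclic_shift[of "m - 1" m ?b] m by (simp add: add.commute)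
  have shift_forward: "(\<Sum>t<m. ?b ((t + 1) mod m)) = (\<Sum>j<m. ?b j)"
    using sum_lessThan_cyclic_shift[of 1 m ?b] m by (simp add: add.commute)
  have "5 * (\<Sum>j<m. ?b j)
      = 3 * (\<Sum>j<m. ?b j) + (\<Sum>t<m. ?b ((t + m - 1) mod m)) + (\<Sum>t<m. ?b ((t + 1) mod m))"
    unfolding shift_back shift_forward by simp
  also have "\<dots> = (\<Sum>t<m. 3 * ?b t + ?b ((t + m - 1) mod m) + ?b ((t + 1) mod m))"
    by (simp only: sum.distrib sum_distrib_left)
  also have "\<dots> = (\<Sum>t<m. (if t = 0 then 2 * real m else 0) - 2)"
    using wheel_b_recurrence[OF n] n by (intro sum.cong) (auto simp: m_def)
  also have "\<dots> = 0"
    using m by (simp add: sum_subtractf)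
  finally show ?thesis unfolding m_def by simp
qed

lemma wheel_B_carrier: "wheel_B n \<in> carrier_mat (n - 1) (n - 1)"
  by (simp add: wheel_B_def)

lemma wheel_X_carrier: "wheel_X n \<in> carrier_mat (n - 1) (n - 1)"
  by (simp add: wheel_X_def)

lemma wheel_C_mult_transpose_add_one:
  assumes "4 \<le> n"
  shows "wheel_C n * transpose_mat (wheel_C n) + 1\<^sub>m (n - 1) = wheel_B n"
proof -
  define m where "m = n - 1"
  have m: "3 \<le> m" "n - 2 = m - 1" using assms by (auto simp: m_def)
  define c :: "nat \<Rightarrow> real" where "c = (\<lambda>j. if j = 0 \<or> j = m - 1 then 1 else 0)"
  have c_transpose: "c ((m - s) mod m) = (if s = 0 \<or> s = 1 then 1 else 0)" if "s < m" for s
    using that m by (cases "s = 0") (auto simp: c_def)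
  have "wheel_C n * transpose_mat (wheel_C n) + 1\<^sub>m m
      = circ_mat m (\<lambda>t. (\<Sum>d<m. c d * c ((m - (t + m - d) mod m) mod m)) + (if t = 0 then 1 else 0))"
    unfolding wheel_C_def m_def[symmetric] m(2) c_def[symmetric]
      transpose_circ_mat mult_circ_mat one_mat_eq_circ_mat add_circ_mat ..
  also have "\<dots> = circ_mat m (\<lambda>j. if j = 0 then 3 else if j = 1 \<or> j = m - 1 then 1 else 0)"
  proof (rule circ_mat_cong)
    fix t assume t: "t < m"
    have "(\<Sum>d<m. c d * c ((m - (t + m - d) mod m) mod m))
        = (\<Sum>d\<in>{0, m - 1}. c d * c ((m - (t + m - d) mod m) mod m))"
      using m by (intro sum.mono_neutral_right) (auto simp: c_def)
    also have "\<dots> = c ((m - t) mod m) + c ((m - (t + 1) mod m) mod m)"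
      using m t by (simp add: c_def)
    also have "\<dots> = (if t = 0 \<or> t = 1 then 1 else 0)
        + (if (t + 1) mod m = 0 \<or> (t + 1) mod m = 1 then 1 else 0)"
      using c_transpose[OF t] c_transpose[of "(t + 1) mod m"] m by simp
    finally show "(\<Sum>d<m. c d * c ((m - (t + m - d) mod m) mod m)) + (if t = 0 then 1 else 0)
        = (if t = 0 then 3 else if t = 1 \<or> t = m - 1 then 1 else 0)"
      using m t by (auto simp: mod_if)
  qed
  finally show ?thesis unfolding wheel_B_def m_def[symmetric] m(2) .
qed

lemma sum_wheel_B_symbol:
  fixes f :: "nat \<Rightarrow> real"
  assumes "4 \<le> n"
  shows "(\<Sum>d<n - 1. (if d = 0 then 3 else if d = 1 \<or> d = n - 2 then 1 else 0) * f d)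
    = 3 * f 0 + f 1 + f (n - 2)"
proof -
  have "(\<Sum>d<n - 1. (if d = 0 then 3 else if d = 1 \<or> d = n - 2 then 1 else 0) * f d)
      = (\<Sum>d\<in>{0, 1, n - 2}. (if d = 0 then 3 else if d = 1 \<or> d = n - 2 then 1 else 0) * f d)"
    using assms by (intro sum.mono_neutral_right) auto
  also have "\<dots> = 3 * f 0 + f 1 + f (n - 2)"
    using assms by simp
  finally show ?thesis .
qed

lemma wheel_B_mult_ones_mat:
  assumes "4 \<le> n"
  shows "wheel_B n * ones_mat (n - 1) k = 5 \<cdot>\<^sub>m ones_mat (n - 1) k"
  unfolding wheel_B_def circ_mat_mult_ones_mat
  using sum_wheel_B_symbol[OF assms, of "\<lambda>_. 1"] by simp

lemma ones_mat_mult_wheel_X: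
  assumes "3 \<le> n"
  shows "ones_mat k (n - 1) * wheel_X n = 0\<^sub>m k (n - 1)"
  unfolding wheel_X_def ones_mat_mult_circ_mat wheel_b_sum[OF assms]
  by (rule eq_matI) auto

lemma wheel_B_mult_wheel_X:
  assumes "4 \<le> n"
  shows "wheel_B n * wheel_X n = 2 \<cdot>\<^sub>m ((real n - 1) \<cdot>\<^sub>m 1\<^sub>m (n - 1) - ones_mat (n - 1) (n - 1))"
proof -
  define m where "m = n - 1"
  have m: "n - 2 = m - 1" "3 \<le> n" using assms by (auto simp: m_def)
  have "wheel_B n * wheel_X n = circ_mat m (\<lambda>t. \<Sum>d<m.
      (if d = 0 then 3 else if d = 1 \<or> d = n - 2 then 1 else 0) * wheel_b n ((t + m - d) mod m))"
    unfolding wheel_B_def wheel_X_def mult_circ_mat m_def ..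
  also have "\<dots> = circ_mat m (\<lambda>t. (if t = 0 then 2 * (real n - 1) else 0) - 2)"
  proof (rule circ_mat_cong)
    fix t assume t: "t < m"
    have "t + m - (m - 1) = t + 1" using t by simp
    then show "(\<Sum>d<m. (if d = 0 then 3 else if d = 1 \<or> d = n - 2 then 1 else 0)
        * wheel_b n ((t + m - d) mod m)) = (if t = 0 then 2 * (real n - 1) else 0) - 2"
      using sum_wheel_B_symbol[OF assms] wheel_b_recurrence[OF m(2)] t
      unfolding m_def[symmetric] m(1) by simp
  qed
  also have "\<dots> = 2 \<cdot>\<^sub>m ((real n - 1) \<cdot>\<^sub>m 1\<^sub>m m - ones_mat m m)"
    by (rule eq_matI) (auto simp: cyclic_diff_eq_0_iff)
  finally show ?thesis unfolding m_def .
qed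

lemma wheel_Q_carrier:
  assumes "0 < n"
  shows "wheel_Q n \<in> carrier_mat n n"
proof -
  have "wheel_Q n \<in> carrier_mat (1 + (n - 1)) (1 + (n - 1))"
    unfolding wheel_Q_def using wheel_B_carrier[of n] by (intro four_block_carrier_mat) auto
  then show ?thesis using assms by simp
qed

lemma wheel_Qplus_carrier:
  assumes "0 < n"
  shows "wheel_Qplus n \<in> carrier_mat n n"
proof -
  have "wheel_Qplus n \<in> carrier_mat (1 + (n - 1)) (1 + (n - 1))"
    unfolding wheel_Qplus_def using wheel_X_carrier[of n] by (intro smult_carrier_mat four_block_carrier_mat) auto
  then show ?thesis using assms by simp
qed

lemma wheel_Q_mult_wheel_Qplus:
  assumes "4 \<le> n"
  shows "wheel_Q n * wheel_Qplus n = 1\<^sub>m n"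
proof -
  define m where "m = n - 1"
  have m: "real n - 1 = real m" "n = 1 + m" "0 < real m" using assms by (auto simp: m_def)
  have B: "wheel_B n \<in> carrier_mat m m" and X: "wheel_X n \<in> carrier_mat m m"
    unfolding m_def by (rule wheel_B_carrier wheel_X_carrier)+
  have B_ones: "wheel_B n * ones_mat m k = 5 \<cdot>\<^sub>m ones_mat m k" for k
    unfolding m_def by (rule wheel_B_mult_ones_mat[OF assms])
  have BX: "wheel_B n * wheel_X n = 2 \<cdot>\<^sub>m (real m \<cdot>\<^sub>m 1\<^sub>m m - ones_mat m m)"
    using wheel_B_mult_wheel_X[OF assms] unfolding m(1) m_def[symmetric] .
  have ones_X: "ones_mat 1 m * wheel_X n = 0\<^sub>m 1 m"
    using assms unfolding m_def by (intro ones_mat_mult_wheel_X) simp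
  define F where "F = four_block_mat (mat 1 1 (\<lambda>_. 5)) (- ones_mat 1 m) (- ones_mat m 1)
    (ones_mat m m + 2 \<cdot>\<^sub>m wheel_X n)"
  have "F \<in> carrier_mat (1 + m) (1 + m)"
    unfolding F_def using X by (intro four_block_carrier_mat) auto
  then have F: "F \<in> carrier_mat n n"
    using m(2) by simp
  have "wheel_Q n * wheel_Qplus n = (1 / (4 * real m)) \<cdot>\<^sub>m (wheel_Q n * F)"
    unfolding wheel_Qplus_def m(1) m_def[symmetric] F_def[symmetric]
    by (rule mult_smult_distrib[OF wheel_Q_carrier F]) (use assms in simp)
  also have "wheel_Q n * F = (4 * real m) \<cdot>\<^sub>m 1\<^sub>m (1 + m)"
    unfolding wheel_Q_def F_def m(1) m_def[symmetric]
    by (rule four_block_mult_eq_smult_one_mat[OF B X B_ones BX ones_X])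
  finally show ?thesis
    using m by (auto intro!: eq_matI)
qed

lemma wheel_B_right_inverse:
  assumes "4 \<le> n"
  shows "wheel_B n * ((1 / (2 * (real n - 1))) \<cdot>\<^sub>m wheel_X n
                      + (1 / (5 * (real n - 1))) \<cdot>\<^sub>m ones_mat (n - 1) (n - 1)) = 1\<^sub>m (n - 1)"
    (is "?B * (?a \<cdot>\<^sub>m ?X + ?c \<cdot>\<^sub>m ?J) = _")
proof -
  have "?B * (?a \<cdot>\<^sub>m ?X + ?c \<cdot>\<^sub>m ?J) = ?a \<cdot>\<^sub>m (?B * ?X) + ?c \<cdot>\<^sub>m (?B * ?J)"
    using mult_add_distrib_mat[OF wheel_B_carrier smult_carrier_mat[OF wheel_X_carrier]
        smult_carrier_mat[OF ones_mat_carrier]]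
      mult_smult_distrib[OF wheel_B_carrier wheel_X_carrier]
      mult_smult_distrib[OF wheel_B_carrier ones_mat_carrier] by simp
  also have "\<dots> = 1\<^sub>m (n - 1)"
  proof (rule eq_matI)
    fix i j assume "i < dim_row (1\<^sub>m (n - 1) :: real mat)" "j < dim_col (1\<^sub>m (n - 1) :: real mat)"
    moreover obtain r where r: "real n - 1 = r" "r \<noteq> 0" using assms by simp
    ultimately show "(?a \<cdot>\<^sub>m (?B * ?X) + ?c \<cdot>\<^sub>m (?B * ?J)) $$ (i, j) = 1\<^sub>m (n - 1) $$ (i, j)"
      unfolding wheel_B_mult_wheel_X[OF assms] wheel_B_mult_ones_mat[OF assms] r(1)
      by (cases "i = j") (simp_all add: field_simps)
  qed (simp_all add: wheel_B_def)
  finally show ?thesis .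
qed

theorem mainTheorem5:
  fixes n :: nat
  assumes "n \<ge> 4"
  shows "invertible_mat (wheel_C n * transpose_mat (wheel_C n) + 1\<^sub>m (n - 1))
    \<and> (\<forall>M. inverts_mat (wheel_C n * transpose_mat (wheel_C n) + 1\<^sub>m (n - 1)) M
            \<and> inverts_mat M (wheel_C n * transpose_mat (wheel_C n) + 1\<^sub>m (n - 1))
          \<longrightarrow> wheel_X n = 2 \<cdot>\<^sub>m (M * ((real n - 1) \<cdot>\<^sub>m 1\<^sub>m (n - 1) - ones_mat (n - 1) (n - 1))))
    \<and> is_moore_penrose_inverse (wheel_Q n) (wheel_Qplus n)"
proof -
  let ?B = "wheel_B n" and ?X = "wheel_X n" and ?J = "ones_mat (n - 1) (n - 1)"
  have "invertible_mat ?B"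
    by (rule invertible_mat_if_right_inverse[OF wheel_B_carrier _ wheel_B_right_inverse[OF assms]]) simp
  moreover have "?X = 2 \<cdot>\<^sub>m (M * ((real n - 1) \<cdot>\<^sub>m 1\<^sub>m (n - 1) - ?J))"
    if "inverts_mat ?B M" "inverts_mat M ?B" for M
  proof -
    have M: "M \<in> carrier_mat (n - 1) (n - 1)" "M * ?B = 1\<^sub>m (n - 1)"
      using inverts_mat_carrier[OF wheel_B_carrier that] by auto
    have "?X = (M * ?B) * ?X"
      using left_mult_one_mat[OF wheel_X_carrier] M(2) by simp
    also have "\<dots> = M * (?B * ?X)"
      by (rule assoc_mult_mat[OF M(1) wheel_B_carrier wheel_X_carrier])
    also have "\<dots> = 2 \<cdot>\<^sub>m (M * ((real n - 1) \<cdot>\<^sub>m 1\<^sub>m (n - 1) - ?J))"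
      unfolding wheel_B_mult_wheel_X[OF assms]
      by (rule mult_smult_distrib[OF M(1) minus_carrier_mat[OF ones_mat_carrier]])
    finally show ?thesis .
  qed
  moreover have "is_moore_penrose_inverse (wheel_Q n) (wheel_Qplus n)"
    using wheel_Q_carrier wheel_Qplus_carrier wheel_Q_mult_wheel_Qplus[OF assms] assms
    by (intro is_moore_penrose_inverse_if_right_inverse) auto
  ultimately show ?thesis
    unfolding wheel_C_mult_transpose_add_one[OF assms] by blast
qed

end
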